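(* For every $k\in\{1,\dots,J\}$ and every $r\in(0,1)$ with $r<r_0$, \[ -\sum_{j=1}^k u_j\alpha_j+\mu_k^{(r)}-\sum_{j=k}^J w_{jk}\,\mu_j^{(r)}\ \ge\ \frac1J(1-w_{kk})\,r^k, \] where $u=u^{(k)}=(w_{1k},\dots,w_{k-1,k},1,0,\dots,0)\in\mathbb{R}_+^J$ (the $k$th entry is $1$, entries after $k$ are $0$).
   Context: $P$ is a substochastic $J\times J$ routing matrix with $I-P$ invertible; $\alpha_j\ge0$; $\lambda=(\lambda_j)$ solves the traffic equations $\lambda_j=\alpha_j+\sum_{\ell=1}^J\lambda_\ell P_{\ell j}$; $\mu_j^{(r)}=\lambda_j+r^j$ for $j=1,\dots,J$. $(w_{jk})$ is the unique solution in $[0,1]^{J\times J}$ of $w_{jk}=P_{jk}+\sum_{\ell=1}^{k-1}P_{j\ell}w_{\ell k}$ (with $w_{kk}<1$), and $r_0=\min_{\{1\le k<j\le J: w_{jk}\ne0\}}((1-w_{kk})/(Jw_{jk}))^{1/(j-k)}$, taken as $1$ if the set is empty. *)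

theory Defs
  imports Complex_Main "Jordan_Normal_Form.Matrix"
begin

(* Indices run over {1..J}; the J x J routing matrix is P :: nat => nat => real,
   with P j l the entry in row j, column l. *)

definition substochastic :: "nat \<Rightarrow> (nat \<Rightarrow> nat \<Rightarrow> real) \<Rightarrow> bool" where
  "substochastic J P \<longleftrightarrow>
     (\<forall>j\<in>{1..J}. \<forall>l\<in>{1..J}. 0 \<le> P j l) \<and>
     (\<forall>j\<in>{1..J}. (\<Sum>l=1..J. P j l) \<le> 1)"

(* the J x J matrix of P (0-based indexing of the library matrix type) *)
definition Pmat :: "nat \<Rightarrow> (nat \<Rightarrow> nat \<Rightarrow> real) \<Rightarrow> real mat" where
  "Pmat J P = mat J J (\<lambda>(i, l). P (i + 1) (l + 1))"

definition mu :: "(nat \<Rightarrow> real) \<Rightarrow> real \<Rightarrow> nat \<Rightarrow> real" where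
  "mu lam r j = lam j + r ^ j"

definition r0 :: "nat \<Rightarrow> (nat \<Rightarrow> nat \<Rightarrow> real) \<Rightarrow> real" where
  "r0 J w =
    (let S = {(k, j). 1 \<le> k \<and> k < j \<and> j \<le> J \<and> w j k \<noteq> 0} in
     if S = {} then 1
     else Min ((\<lambda>(k, j). ((1 - w k k) / (real J * w j k)) powr (1 / real (j - k))) ` S))"

definition uvec :: "(nat \<Rightarrow> nat \<Rightarrow> real) \<Rightarrow> nat \<Rightarrow> nat \<Rightarrow> real" where
  "uvec w k j = (if j < k then w j k else if j = k then 1 else 0)"

end

theory Submission
  imports Defs
begin

text \<open>Summing the recursion for \<open>w\<close> against \<open>\<lambda>\<close> and using the traffic equations gives
  \<open>\<Sum>\<^sub>j\<^sub>\<ge>\<^sub>k w\<^sub>j\<^sub>k \<lambda>\<^sub>j = \<lambda>\<^sub>k - \<Sum>\<^sub>j\<^sub>\<le>\<^sub>k u\<^sub>j \<alpha>\<^sub>j\<close>, so the \<open>\<lambda>\<close>- and \<open>\<alpha>\<close>-terms cancel and the left-hand side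
  equals \<open>(1 - w\<^sub>k\<^sub>k) r\<^sup>k - \<Sum>\<^sub>j\<^sub>>\<^sub>k w\<^sub>j\<^sub>k r\<^sup>j\<close>. The choice of \<open>r\<^sub>0\<close> makes each of the at most
  \<open>J - 1\<close> tail terms at most \<open>(1 - w\<^sub>k\<^sub>k) r\<^sup>k / J\<close>. Substochasticity, invertibility and
  \<open>\<alpha> \<ge> 0\<close> only guarantee that \<open>\<lambda>\<close> and \<open>w\<close> exist; the estimate does not use them.\<close>

lemma sum_split_at:
  fixes f :: "nat \<Rightarrow> real"
  assumes "1 \<le> k" "k \<le> J"
  shows "(\<Sum>j=1..J. f j) = (\<Sum>j=1..<k. f j) + (\<Sum>j=k..J. f j)"
proof -
  have "{1..J} = {1..<k} \<union> {k..J}" using assms by auto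
  then show ?thesis by (simp add: sum.union_disjoint ivl_disj_int)
qed

lemma traffic_weighted_tail:
  fixes P w :: "nat \<Rightarrow> nat \<Rightarrow> real" and alpha lam :: "nat \<Rightarrow> real"
  assumes traffic: "\<forall>j\<in>{1..J}. lam j = alpha j + (\<Sum>l=1..J. lam l * P l j)"
    and w_eq: "\<forall>j\<in>{1..J}. w j k = P j k + (\<Sum>l=1..<k. P j l * w l k)"
    and k: "k \<in> {1..J}"
  shows "(\<Sum>j=k..J. w j k * lam j) = lam k - alpha k - (\<Sum>l=1..<k. w l k * alpha l)"
proof -
  have inflow: "(\<Sum>j=1..J. lam j * P j l) = lam l - alpha l" if "l \<in> {1..k}" for l
    using traffic that k by force
  have "(\<Sum>j=1..J. lam j * w j k)
      = (\<Sum>j=1..J. lam j * P j k) + (\<Sum>j=1..J. \<Sum>l=1..<k. lam j * P j l * w l k)"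
    using w_eq by (simp add: sum.distrib[symmetric] sum_distrib_left algebra_simps)
  also have "(\<Sum>j=1..J. \<Sum>l=1..<k. lam j * P j l * w l k)
      = (\<Sum>l=1..<k. w l k * (\<Sum>j=1..J. lam j * P j l))"
    by (subst sum.swap) (simp add: sum_distrib_left algebra_simps)
  also have "\<dots> = (\<Sum>l=1..<k. w l k * (lam l - alpha l))"
    using inflow by (intro sum.cong) auto
  finally have "(\<Sum>j=1..<k. lam j * w j k) + (\<Sum>j=k..J. lam j * w j k)
      = lam k - alpha k + (\<Sum>l=1..<k. w l k * (lam l - alpha l))"
    using inflow[of k] k sum_split_at[of k J "\<lambda>j. lam j * w j k"] by simp
  then show ?thesis
    by (simp add: algebra_simps sum_subtractf mult.commute)
qed

lemma sum_uvec:
  assumes "1 \<le> k"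
  shows "(\<Sum>j=1..k. uvec w k j * a j) = (\<Sum>l=1..<k. w l k * a l) + a k"
proof -
  have "{1..k} = insert k {1..<k}" using assms by auto
  then have "(\<Sum>j=1..k. uvec w k j * a j) = uvec w k k * a k + (\<Sum>j=1..<k. uvec w k j * a j)"
    by simp
  also have "(\<Sum>j=1..<k. uvec w k j * a j) = (\<Sum>l=1..<k. w l k * a l)"
    by (intro sum.cong) (auto simp: uvec_def)
  finally show ?thesis by (simp add: uvec_def)
qed

lemma r0_le:
  assumes "1 \<le> k" "k < j" "j \<le> J" "w j k \<noteq> 0"
  shows "r0 J w \<le> ((1 - w k k) / (real J * w j k)) powr (1 / real (j - k))"
proof -
  let ?S = "{(k, j). 1 \<le> k \<and> k < j \<and> j \<le> J \<and> w j k \<noteq> 0}"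
  let ?f = "\<lambda>(k, j). ((1 - w k k) / (real J * w j k)) powr (1 / real (j - k))"
  have mem: "(k, j) \<in> ?S" using assms by auto
  have "finite ?S"
    by (rule finite_subset[of _ "{0..J} \<times> {0..J}"]) auto
  moreover have "?f (k, j) \<in> ?f ` ?S" using mem by (rule imageI)
  ultimately have "Min (?f ` ?S) \<le> ?f (k, j)" by (intro Min_le) auto
  moreover have "r0 J w = Min (?f ` ?S)"
    using mem unfolding r0_def Let_def by (intro if_not_P) blast
  ultimately show ?thesis by simp
qed

lemma power_less_of_less_root:
  fixes r x :: real
  assumes "0 < r" "0 < x" "0 < n" "r < x powr (1 / real n)"
  shows "r ^ n < x"
proof -
  have "r ^ n = r powr real n" using assms by (simp add: powr_realpow)
  also have "\<dots> < (x powr (1 / real n)) powr real n"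
    using assms by (intro powr_less_mono2) auto
  also have "\<dots> = x" using assms by (simp add: powr_powr)
  finally show ?thesis .
qed

lemma tail_term_le:
  assumes r: "0 < r" "r < r0 J w"
    and kj: "1 \<le> k" "k < j" "j \<le> J"
    and w: "0 \<le> w j k" "w k k < 1"
  shows "w j k * r ^ j \<le> (1 - w k k) * r ^ k / real J"
proof (cases "w j k = 0")
  case True
  then show ?thesis using r w by simp
next
  case False
  with w have wpos: "0 < w j k" by linarith
  define x where "x = (1 - w k k) / (real J * w j k)"
  have "0 < x" using w wpos kj unfolding x_def by simp
  moreover have "r < x powr (1 / real (j - k))"
    using r r0_le[of k j J w] kj False unfolding x_def by linarith
  ultimately have "r ^ (j - k) < x"
    using r kj by (intro power_less_of_less_root) auto
  then have "w j k * r ^ (j - k) * r ^ k \<le> w j k * x * r ^ k"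
    using wpos r by (intro mult_right_mono) auto
  moreover have "r ^ (j - k) * r ^ k = r ^ j" using kj by (simp add: power_add[symmetric])
  ultimately show ?thesis using wpos unfolding x_def by (simp add: mult.assoc)
qed

theorem mainTheorem8:
  fixes J :: nat and P w :: "nat \<Rightarrow> nat \<Rightarrow> real" and alpha lam :: "nat \<Rightarrow> real"
  assumes J: "1 \<le> J"
    and sub: "substochastic J P"
    and inv: "invertible_mat (1\<^sub>m J - Pmat J P)"
    and alpha: "\<forall>j\<in>{1..J}. 0 \<le> alpha j"
    and traffic: "\<forall>j\<in>{1..J}. lam j = alpha j + (\<Sum>l=1..J. lam l * P l j)"
    and w_range: "\<forall>j\<in>{1..J}. \<forall>k\<in>{1..J}. 0 \<le> w j k \<and> w j k \<le> 1"
    and w_eq: "\<forall>j\<in>{1..J}. \<forall>k\<in>{1..J}. w j k = P j k + (\<Sum>l=1..<k. P j l * w l k)"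
    and w_diag: "\<forall>k\<in>{1..J}. w k k < 1"
    and k: "k \<in> {1..J}"
    and r: "0 < r" "r < 1" "r < r0 J w"
  shows "- (\<Sum>j=1..k. uvec w k j * alpha j) + mu lam r k - (\<Sum>j=k..J. w j k * mu lam r j)
           \<ge> 1 / real J * (1 - w k k) * r ^ k"
proof -
  define c where "c = (1 - w k k) * r ^ k / real J"
  have k1: "1 \<le> k" and kJ: "k \<le> J" using k by auto
  have "c \<ge> 0" using w_diag k r unfolding c_def by (simp add: less_imp_le)
  have "(\<Sum>j=Suc k..J. w j k * r ^ j) \<le> (\<Sum>j=Suc k..J. c)"
    using w_range w_diag k r unfolding c_def by (intro sum_mono tail_term_le) auto
  also have "\<dots> \<le> (real J - 1) * c"
    using \<open>c \<ge> 0\<close> k1 kJ by (simp add: mult_right_mono of_nat_diff)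
  finally have tail: "(\<Sum>j=Suc k..J. w j k * r ^ j) \<le> (real J - 1) * c" .
  have "(\<Sum>j=k..J. w j k * mu lam r j)
      = (\<Sum>j=k..J. w j k * lam j) + w k k * r ^ k + (\<Sum>j=Suc k..J. w j k * r ^ j)"
    using kJ by (simp add: mu_def algebra_simps sum.distrib sum.atLeast_Suc_atMost)
  moreover have "(\<Sum>j=k..J. w j k * lam j) = lam k - alpha k - (\<Sum>l=1..<k. w l k * alpha l)"
    using w_eq k by (intro traffic_weighted_tail[OF traffic _ k]) blast
  ultimately have "- (\<Sum>j=1..k. uvec w k j * alpha j) + mu lam r k - (\<Sum>j=k..J. w j k * mu lam r j)
      = (1 - w k k) * r ^ k - (\<Sum>j=Suc k..J. w j k * r ^ j)"
    using sum_uvec[OF k1] by (simp add: mu_def algebra_simps)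
  moreover have "(1 - w k k) * r ^ k = real J * c" using J unfolding c_def by simp
  moreover have "(real J - 1) * c = real J * c - c" by (simp add: algebra_simps)
  moreover have "1 / real J * (1 - w k k) * r ^ k = c" unfolding c_def by simp
  ultimately show ?thesis using tail by linarith
qed

end
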